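(* Let $A$ be a nonempty set of positive integers and let $n$ be a positive integer. Then (a) $\displaystyle nN^p_A(n)=\sum_{k=1}^{n-1}N^p_A(k)\sigma_A(n-k)+\sum_{t=1}^{n}t\,\tau_A(t)\,p_A(n-t)$; (b) $\displaystyle nN^q_A(n)=\sum_{k=1}^{n-1}N^q_A(k)\sigma^s_A(n-k)+\sum_{t=1}^{n}t\,\tau^s_A(t)\,q_A(n-t)$.
   Context: For a set $A$ of positive integers: $N^p_A(n)$ (resp. $N^q_A(n)$) is the total number of parts, summed over all partitions (resp. partitions into pairwise distinct parts) of $n$ with parts in $A$; $p_A(m)$ (resp. $q_A(m)$) is the number of partitions (resp. partitions into distinct parts) of $m$ with parts in $A$, with $p_A(0)=q_A(0)=1$. $\tau_A(n)=\sum_{a\in A,\,a\mid n}1$, $\tau^s_A(n)=\sum_{a\in A,\,a\mid n}(-1)^{n/a-1}$, $\sigma_A(n)=\sum_{a\in A,\,a\mid n}a$, $\sigma^s_A(n)=\sum_{a\in A,\,a\mid n}(-1)^{n/a-1}a$. *)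

theory Defs
  imports Main "HOL-Library.Multiset"
begin

definition parts_p :: "nat set \<Rightarrow> nat \<Rightarrow> nat multiset set" where
  "parts_p A n = {M. set_mset M \<subseteq> A \<and> sum_mset M = n}"

definition parts_q :: "nat set \<Rightarrow> nat \<Rightarrow> nat set set" where
  "parts_q A n = {S. finite S \<and> S \<subseteq> A \<and> \<Sum>S = n}"

definition p_A :: "nat set \<Rightarrow> nat \<Rightarrow> nat" where
  "p_A A m = card (parts_p A m)"

definition q_A :: "nat set \<Rightarrow> nat \<Rightarrow> nat" where
  "q_A A m = card (parts_q A m)"

definition Np :: "nat set \<Rightarrow> nat \<Rightarrow> nat" where
  "Np A n = (\<Sum>M\<in>parts_p A n. size M)"

definition Nq :: "nat set \<Rightarrow> nat \<Rightarrow> nat" where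
  "Nq A n = (\<Sum>S\<in>parts_q A n. card S)"

definition tau_A :: "nat set \<Rightarrow> nat \<Rightarrow> int" where
  "tau_A A n = (\<Sum>a\<in>{a\<in>A. a dvd n}. 1)"

definition tau_s_A :: "nat set \<Rightarrow> nat \<Rightarrow> int" where
  "tau_s_A A n = (\<Sum>a\<in>{a\<in>A. a dvd n}. (-1) ^ (n div a - 1))"

definition sigma_A :: "nat set \<Rightarrow> nat \<Rightarrow> int" where
  "sigma_A A n = (\<Sum>a\<in>{a\<in>A. a dvd n}. int a)"

definition sigma_s_A :: "nat set \<Rightarrow> nat \<Rightarrow> int" where
  "sigma_s_A A n = (\<Sum>a\<in>{a\<in>A. a dvd n}. (-1) ^ (n div a - 1) * int a)"

end

theory Submission
  imports Defs
begin

text \<open>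
  Let P be p_A (resp. q_A), N the matching part count, and (f * g)(m) = \<Sum>t=1..m. f t g (m - t).
  Summing a weight w over all parts of all partitions of m gives
  \<Sum>s=1..m. (\<Sum>a \<in> A, a dvd s. c (s div a) w a) P (m - s), with c = 1 (resp. c j = (-1)^(j-1)):
  the partitions with at least j copies of a are those of m - j a with j copies of a added, while
  the partitions of m into distinct parts containing a number q_A (m - a) minus those of m - a
  containing a, which unfolds into an alternating sum.  The weights w = 1 and w a = a give
  N = \<tau> * P and m P (m) = (\<sigma> * P)(m).  Multiplication by the index is a derivation of *,
  so n N = (t \<tau>) * P + \<tau> * (\<sigma> * P) = (t \<tau>) * P + N * \<sigma>.
\<close>

lemma sum_mset_eq_sum_count:
  fixes f :: "'a \<Rightarrow> 'b::comm_semiring_1"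
  assumes "finite B" and "set_mset M \<subseteq> B"
  shows "(\<Sum>x\<in>#M. f x) = (\<Sum>x\<in>B. of_nat (count M x) * f x)"
  using assms(2)
proof (induction M)
  case empty
  then show ?case by simp
next
  case (add y M)
  have "(\<Sum>x\<in>B. of_nat (count (add_mset y M) x) * f x)
      = (\<Sum>x\<in>B. of_nat (count M x) * f x + (if x = y then f y else 0))"
    by (rule sum.cong) (auto simp: algebra_simps)
  also have "\<dots> = (\<Sum>x\<in>B. of_nat (count M x) * f x) + f y"
    using add.prems assms(1) by (simp add: sum.distrib)
  finally show ?case using add by (simp add: add.commute)
qed

lemma parts_p_set_mset_subset:
  "M \<in> parts_p A m \<Longrightarrow> set_mset M \<subseteq> {a\<in>A. a \<le> m}"
  unfolding parts_p_def by (auto dest: multi_member_split)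

lemma parts_q_subset: "S \<in> parts_q A m \<Longrightarrow> S \<subseteq> {a\<in>A. a \<le> m}"
  unfolding parts_q_def using member_le_sum by fastforce

lemma finite_parts_p:
  assumes "\<forall>a\<in>A. 0 < a"
  shows "finite (parts_p A m)"
proof (rule finite_subset)
  show "parts_p A m \<subseteq> (\<Union>k\<le>m. multisets_of_size {a\<in>A. a \<le> m} k)"
  proof
    fix M assume M: "M \<in> parts_p A m"
    have "size M = (\<Sum>x\<in>#M. 1)" by (rule size_eq_sum_mset)
    also have "\<dots> \<le> (\<Sum>x\<in>#M. x)"
      by (rule sum_mset_mono) (use assms M in \<open>auto simp: parts_p_def Suc_le_eq\<close>)
    also have "\<dots> = m" using M by (simp add: parts_p_def)
    finally show "M \<in> (\<Union>k\<le>m. multisets_of_size {a\<in>A. a \<le> m} k)"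
      using parts_p_set_mset_subset[OF M] by (auto simp: multisets_of_size_def)
  qed
qed auto

lemma finite_parts_q: "finite (parts_q A m)"
  by (rule finite_subset[of _ "Pow {a\<in>A. a \<le> m}"]) (auto dest: parts_q_subset)

lemma count_parts_p_le:
  assumes "M \<in> parts_p A m"
  shows "count M a * a \<le> m"
proof -
  have "{#x \<in># M. x = a#} \<subseteq># M" by (rule multiset_filter_subset)
  then have "sum_mset {#x \<in># M. x = a#} \<le> sum_mset M"
    by (metis subset_mset.le_iff_add sum_mset.union le_add1)
  then show ?thesis using assms by (simp add: filter_eq_replicate_mset parts_p_def)
qed

lemma card_parts_p_count_ge:
  assumes "a \<in> A" and "j * a \<le> m"
  shows "card {M \<in> parts_p A m. j \<le> count M a} = p_A A (m - j * a)"
proof -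
  let ?R = "replicate_mset j a"
  have "{M \<in> parts_p A m. j \<le> count M a} = (\<lambda>N. N + ?R) ` parts_p A (m - j * a)"
  proof (intro equalityI subsetI)
    fix M assume M: "M \<in> {M \<in> parts_p A m. j \<le> count M a}"
    then have "?R \<subseteq># M" by (simp add: subseteq_mset_def count_replicate_mset)
    then have "M = (M - ?R) + ?R" and "sum_mset (M - ?R) = m - j * a"
      using M by (simp_all add: sum_mset_diff parts_p_def mult.commute)
    moreover have "set_mset (M - ?R) \<subseteq> A" using M by (auto simp: parts_p_def dest: in_diffD)
    ultimately show "M \<in> (\<lambda>N. N + ?R) ` parts_p A (m - j * a)"
      unfolding parts_p_def by blast
  next
    fix M assume "M \<in> (\<lambda>N. N + ?R) ` parts_p A (m - j * a)"
    then show "M \<in> {M \<in> parts_p A m. j \<le> count M a}"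
      using assms by (auto simp: parts_p_def split: if_splits)
  qed
  then show ?thesis
    unfolding p_A_def by (simp add: card_image)
qed

lemma sum_count_parts_p:
  assumes "\<forall>a\<in>A. 0 < a" and "a \<in> A"
  shows "(\<Sum>M\<in>parts_p A m. count M a) = (\<Sum>j=1..m div a. p_A A (m - j * a))"
proof -
  have "0 < a" using assms by blast
  have "(\<Sum>M\<in>parts_p A m. count M a)
      = (\<Sum>M\<in>parts_p A m. card {j \<in> {1..m div a}. j \<le> count M a})"
  proof (rule sum.cong[OF refl])
    fix M assume "M \<in> parts_p A m"
    then have "count M a \<le> m div a"
      using count_parts_p_le \<open>0 < a\<close> by (simp add: less_eq_div_iff_mult_less_eq)
    then have "{j \<in> {1..m div a}. j \<le> count M a} = {1..count M a}" by auto
    then show "count M a = card {j \<in> {1..m div a}. j \<le> count M a}" by simp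
  qed
  also have "\<dots> = (\<Sum>j=1..m div a. card {M \<in> parts_p A m. j \<le> count M a})"
    unfolding card_eq_sum using finite_parts_p[OF assms(1)] by (rule sum.swap_restrict) simp
  also have "\<dots> = (\<Sum>j=1..m div a. p_A A (m - j * a))"
  proof (rule sum.cong[OF refl])
    fix j assume "j \<in> {1..m div a}"
    then have "j * a \<le> m" using \<open>0 < a\<close> by (simp add: less_eq_div_iff_mult_less_eq)
    then show "card {M \<in> parts_p A m. j \<le> count M a} = p_A A (m - j * a)"
      using assms(2) by (rule card_parts_p_count_ge[rotated])
  qed
  finally show ?thesis .
qed

lemma card_parts_q_mem:
  assumes "a \<in> A" and "a \<le> m"
  shows "card {S \<in> parts_q A m. a \<in> S} + card {S \<in> parts_q A (m - a). a \<in> S} = q_A A (m - a)"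
proof -
  have "{S \<in> parts_q A m. a \<in> S} = insert a ` {S \<in> parts_q A (m - a). a \<notin> S}"
  proof (intro equalityI subsetI)
    fix S assume S: "S \<in> {S \<in> parts_q A m. a \<in> S}"
    then have "S = insert a (S - {a})" and "\<Sum>(S - {a}) = m - a"
      by (auto simp: parts_q_def sum_diff1_nat)
    with S show "S \<in> insert a ` {S \<in> parts_q A (m - a). a \<notin> S}"
      unfolding parts_q_def by blast
  next
    fix S assume "S \<in> insert a ` {S \<in> parts_q A (m - a). a \<notin> S}"
    then obtain T where "T \<in> parts_q A (m - a)" "a \<notin> T" "S = insert a T" by blast
    then show "S \<in> {S \<in> parts_q A m. a \<in> S}" using assms by (auto simp: parts_q_def)
  qed
  moreover have "inj_on (insert a) {S \<in> parts_q A (m - a). a \<notin> S}"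
    by (rule inj_onI) (metis Diff_insert_absorb mem_Collect_eq)
  ultimately have "card {S \<in> parts_q A m. a \<in> S} = card {S \<in> parts_q A (m - a). a \<notin> S}"
    by (simp add: card_image)
  moreover have "card {S \<in> parts_q A (m - a). a \<notin> S} + card {S \<in> parts_q A (m - a). a \<in> S}
      = q_A A (m - a)"
  proof -
    have "card {S \<in> parts_q A (m - a). a \<notin> S} + card {S \<in> parts_q A (m - a). a \<in> S}
        = card ({S \<in> parts_q A (m - a). a \<notin> S} \<union> {S \<in> parts_q A (m - a). a \<in> S})"
      by (rule card_Un_disjoint[symmetric]) (auto simp: finite_parts_q)
    also have "{S \<in> parts_q A (m - a). a \<notin> S} \<union> {S \<in> parts_q A (m - a). a \<in> S} = parts_q A (m - a)"
      by blast
    finally show ?thesis unfolding q_A_def .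
  qed
  ultimately show ?thesis by simp
qed

lemma card_parts_q_mem_alternating:
  assumes "a \<in> A" and "0 < a"
  shows "(of_nat (card {S \<in> parts_q A m. a \<in> S}) :: 'b::comm_ring_1)
       = (\<Sum>j=1..m div a. (-1) ^ (j - 1) * of_nat (q_A A (m - j * a)))"
proof (induction m rule: less_induct)
  case (less m)
  show ?case
  proof (cases "a \<le> m")
    case False
    then have "{S \<in> parts_q A m. a \<in> S} = {}" using parts_q_subset by fastforce
    with False show ?thesis by (simp only:) simp
  next
    case True
    define K where "K = (m - a) div a"
    have "m div a = Suc K" unfolding K_def using True \<open>0 < a\<close> by (simp add: le_div_geq)
    have "(\<Sum>j=1..m div a. (-1) ^ (j - 1) * of_nat (q_A A (m - j * a)) :: 'b)
        = of_nat (q_A A (m - a)) + (\<Sum>j=1..K. (-1) ^ j * of_nat (q_A A (m - Suc j * a)))"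
      unfolding \<open>m div a = Suc K\<close>
      by (simp add: sum.atLeast_Suc_atMost sum.shift_bounds_cl_Suc_ivl del: sum.cl_ivl_Suc)
    also have "(\<Sum>j=1..K. (-1) ^ j * of_nat (q_A A (m - Suc j * a)) :: 'b)
        = - (\<Sum>j=1..K. (-1) ^ (j - 1) * of_nat (q_A A (m - a - j * a)))"
      unfolding sum_negf[symmetric]
      by (rule sum.cong) (auto simp: diff_diff_left add.commute power_eq_if)
    also have "(\<Sum>j=1..K. (-1) ^ (j - 1) * of_nat (q_A A (m - a - j * a)) :: 'b)
        = of_nat (card {S \<in> parts_q A (m - a). a \<in> S})"
      unfolding K_def using less.IH[of "m - a"] True \<open>0 < a\<close> by simp
    finally have "(\<Sum>j=1..m div a. (-1) ^ (j - 1) * of_nat (q_A A (m - j * a)) :: 'b)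
        = of_nat (q_A A (m - a)) - of_nat (card {S \<in> parts_q A (m - a). a \<in> S})"
      by simp
    moreover have "(of_nat (card {S \<in> parts_q A m. a \<in> S}) :: 'b)
        = of_nat (q_A A (m - a)) - of_nat (card {S \<in> parts_q A (m - a). a \<in> S})"
      using arg_cong[OF card_parts_q_mem[OF assms(1) True], of "of_nat :: nat \<Rightarrow> 'b"]
      by (simp add: eq_diff_eq)
    ultimately show ?thesis by (simp only:)
  qed
qed

lemma sum_multiples_eq_sum_divisors:
  fixes h :: "nat \<Rightarrow> nat \<Rightarrow> 'b::comm_monoid_add"
  assumes "\<forall>a\<in>A. 0 < a"
  shows "(\<Sum>a\<in>{a\<in>A. a \<le> m}. \<Sum>j=1..m div a. h a (j * a))
       = (\<Sum>s=1..m. \<Sum>a\<in>{a\<in>A. a dvd s}. h a s)"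
proof -
  have multiples: "(\<lambda>j. j * a) ` {1..m div a} = {s \<in> {1..m}. a dvd s}" if "0 < a" for a
  proof (intro equalityI subsetI)
    fix s assume "s \<in> {s \<in> {1..m}. a dvd s}"
    then have "s = s div a * a" and "s div a \<in> {1..m div a}"
      using that by (auto simp: div_le_mono dvd_div_eq_0_iff)
    then show "s \<in> (\<lambda>j. j * a) ` {1..m div a}" by blast
  qed (use that in \<open>auto simp: less_eq_div_iff_mult_less_eq\<close>)
  have "(\<Sum>a\<in>{a\<in>A. a \<le> m}. \<Sum>j=1..m div a. h a (j * a))
      = (\<Sum>a\<in>{a\<in>A. a \<le> m}. \<Sum>s\<in>{s \<in> {1..m}. a dvd s}. h a s)"
  proof (rule sum.cong[OF refl])
    fix a assume "a \<in> {a\<in>A. a \<le> m}"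
    then have "0 < a" using assms by blast
    then show "(\<Sum>j=1..m div a. h a (j * a)) = (\<Sum>s\<in>{s \<in> {1..m}. a dvd s}. h a s)"
      using sum.reindex[of "\<lambda>j. j * a" "{1..m div a}" "h a"] multiples[OF \<open>0 < a\<close>]
      by (simp add: inj_on_def o_def)
  qed
  also have "\<dots> = (\<Sum>s=1..m. \<Sum>a\<in>{a \<in> {a\<in>A. a \<le> m}. a dvd s}. h a s)"
    by (rule sum.swap_restrict) simp_all
  also have "\<dots> = (\<Sum>s=1..m. \<Sum>a\<in>{a\<in>A. a dvd s}. h a s)"
    by (intro sum.cong refl arg_cong[where f = "\<lambda>B. sum (h _) B"]) (auto dest: dvd_imp_le)
  finally show ?thesis .
qed

lemma sum_parts_p_sum_mset:
  fixes w :: "nat \<Rightarrow> 'b::comm_semiring_1"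
  assumes "\<forall>a\<in>A. 0 < a"
  shows "(\<Sum>M\<in>parts_p A m. \<Sum>x\<in>#M. w x)
       = (\<Sum>s=1..m. (\<Sum>a\<in>{a\<in>A. a dvd s}. w a) * of_nat (p_A A (m - s)))"
proof -
  let ?B = "{a\<in>A. a \<le> m}"
  have "(\<Sum>M\<in>parts_p A m. \<Sum>x\<in>#M. w x) = (\<Sum>M\<in>parts_p A m. \<Sum>a\<in>?B. of_nat (count M a) * w a)"
    by (intro sum.cong refl sum_mset_eq_sum_count parts_p_set_mset_subset) simp_all
  also have "\<dots> = (\<Sum>a\<in>?B. of_nat (\<Sum>M\<in>parts_p A m. count M a) * w a)"
    by (subst sum.swap) (simp add: sum_distrib_right)
  also have "\<dots> = (\<Sum>a\<in>?B. \<Sum>j=1..m div a. w a * of_nat (p_A A (m - j * a)))"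
    using assms by (intro sum.cong refl) (simp add: sum_count_parts_p sum_distrib_left mult.commute)
  also have "\<dots> = (\<Sum>s=1..m. \<Sum>a\<in>{a\<in>A. a dvd s}. w a * of_nat (p_A A (m - s)))"
    using sum_multiples_eq_sum_divisors[OF assms, where h = "\<lambda>a s. w a * of_nat (p_A A (m - s))"] .
  finally show ?thesis by (simp add: sum_distrib_right)
qed

lemma sum_parts_q_sum:
  fixes w :: "nat \<Rightarrow> 'b::comm_ring_1"
  assumes "\<forall>a\<in>A. 0 < a"
  shows "(\<Sum>S\<in>parts_q A m. \<Sum>a\<in>S. w a)
       = (\<Sum>s=1..m. (\<Sum>a\<in>{a\<in>A. a dvd s}. (-1) ^ (s div a - 1) * w a) * of_nat (q_A A (m - s)))"
proof -
  let ?B = "{a\<in>A. a \<le> m}"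
  have "(\<Sum>S\<in>parts_q A m. \<Sum>a\<in>S. w a) = (\<Sum>S\<in>parts_q A m. \<Sum>a\<in>{a \<in> ?B. a \<in> S}. w a)"
    by (intro sum.cong refl arg_cong[where f = "sum w"]) (auto dest: parts_q_subset)
  also have "\<dots> = (\<Sum>a\<in>?B. of_nat (card {S \<in> parts_q A m. a \<in> S}) * w a)"
    by (subst sum.swap_restrict) (simp_all add: finite_parts_q)
  also have "\<dots> = (\<Sum>a\<in>?B. \<Sum>j=1..m div a. (-1) ^ (j * a div a - 1) * w a * of_nat (q_A A (m - j * a)))"
    using assms by (intro sum.cong refl)
      (simp add: card_parts_q_mem_alternating sum_distrib_left mult_ac)
  also have "\<dots> = (\<Sum>s=1..m. \<Sum>a\<in>{a\<in>A. a dvd s}. (-1) ^ (s div a - 1) * w a * of_nat (q_A A (m - s)))"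
    using sum_multiples_eq_sum_divisors[OF assms, where h =
        "\<lambda>a s. (-1) ^ (s div a - 1) * w a * of_nat (q_A A (m - s))"] .
  finally show ?thesis by (simp add: sum_distrib_right)
qed

lemma Np_eq_convolution:
  assumes "\<forall>a\<in>A. 0 < a"
  shows "int (Np A m) = (\<Sum>t=1..m. tau_A A t * int (p_A A (m - t)))"
proof -
  have "int (Np A m) = (\<Sum>M\<in>parts_p A m. \<Sum>x\<in>#M. 1)" by (simp add: Np_def)
  also have "\<dots> = (\<Sum>t=1..m. (\<Sum>a\<in>{a\<in>A. a dvd t}. 1) * int (p_A A (m - t)))"
    by (rule sum_parts_p_sum_mset[OF assms])
  finally show ?thesis by (simp only: tau_A_def)
qed

lemma p_A_mult_eq_convolution:
  assumes "\<forall>a\<in>A. 0 < a"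
  shows "int m * int (p_A A m) = (\<Sum>t=1..m. sigma_A A t * int (p_A A (m - t)))"
proof -
  have "int m * int (p_A A m) = (\<Sum>M\<in>parts_p A m. int (sum_mset M))"
    by (simp add: p_A_def parts_p_def)
  also have "\<dots> = (\<Sum>M\<in>parts_p A m. \<Sum>x\<in>#M. int x)" by simp
  also have "\<dots> = (\<Sum>t=1..m. (\<Sum>a\<in>{a\<in>A. a dvd t}. int a) * int (p_A A (m - t)))"
    by (rule sum_parts_p_sum_mset[OF assms])
  finally show ?thesis by (simp only: sigma_A_def)
qed

lemma Nq_eq_convolution:
  assumes "\<forall>a\<in>A. 0 < a"
  shows "int (Nq A m) = (\<Sum>t=1..m. tau_s_A A t * int (q_A A (m - t)))"
proof -
  have "int (Nq A m) = (\<Sum>S\<in>parts_q A m. \<Sum>a\<in>S. 1)" by (simp add: Nq_def)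
  also have "\<dots> = (\<Sum>t=1..m. (\<Sum>a\<in>{a\<in>A. a dvd t}. (-1) ^ (t div a - 1) * 1) * int (q_A A (m - t)))"
    by (rule sum_parts_q_sum[OF assms])
  finally show ?thesis by (simp add: tau_s_A_def)
qed

lemma q_A_mult_eq_convolution:
  assumes "\<forall>a\<in>A. 0 < a"
  shows "int m * int (q_A A m) = (\<Sum>t=1..m. sigma_s_A A t * int (q_A A (m - t)))"
proof -
  have "int m * int (q_A A m) = (\<Sum>S\<in>parts_q A m. int (\<Sum>S))"
    by (simp add: q_A_def parts_q_def)
  also have "\<dots> = (\<Sum>S\<in>parts_q A m. \<Sum>a\<in>S. int a)" by simp
  also have "\<dots> = (\<Sum>t=1..m. (\<Sum>a\<in>{a\<in>A. a dvd t}. (-1) ^ (t div a - 1) * int a) * int (q_A A (m - t)))"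
    by (rule sum_parts_q_sum[OF assms])
  finally show ?thesis by (simp only: sigma_s_A_def)
qed

lemma convolution_assoc:
  fixes f g h :: "nat \<Rightarrow> 'a::comm_semiring_1"
  shows "(\<Sum>t=1..n. f t * (\<Sum>s=1..n - t. g s * h (n - t - s)))
       = (\<Sum>k=1..n - 1. (\<Sum>t=1..k. f t * h (k - t)) * g (n - k))"
proof -
  have "(\<Sum>t=1..n. f t * (\<Sum>s=1..n - t. g s * h (n - t - s)))
      = (\<Sum>(t, s)\<in>Sigma {1..n} (\<lambda>t. {1..n - t}). f t * g s * h (n - t - s))"
    by (simp add: sum.Sigma sum_distrib_left mult.assoc)
  also have "\<dots> = (\<Sum>(k, t)\<in>Sigma {1..n - 1} (\<lambda>k. {1..k}). f t * h (k - t) * g (n - k))"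
    by (rule sum.reindex_bij_witness[where j = "\<lambda>(t, s). (n - s, t)" and i = "\<lambda>(k, t). (t, n - k)"])
       (auto simp: diff_diff_left add.commute mult_ac)
  also have "\<dots> = (\<Sum>k=1..n - 1. (\<Sum>t=1..k. f t * h (k - t)) * g (n - k))"
    by (simp add: sum.Sigma sum_distrib_right)
  finally show ?thesis .
qed

lemma index_mult_convolution:
  fixes N P tau sigma :: "nat \<Rightarrow> 'a::comm_semiring_1"
  assumes N: "\<And>m. N m = (\<Sum>t=1..m. tau t * P (m - t))"
    and P: "\<And>m. of_nat m * P m = (\<Sum>s=1..m. sigma s * P (m - s))"
  shows "of_nat n * N n = (\<Sum>k=1..n - 1. N k * sigma (n - k)) + (\<Sum>t=1..n. of_nat t * tau t * P (n - t))"
proof -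
  have "of_nat n * N n = (\<Sum>t=1..n. (of_nat t + of_nat (n - t)) * (tau t * P (n - t)))"
    unfolding N sum_distrib_left by (intro sum.cong refl) (simp flip: of_nat_add)
  also have "\<dots> = (\<Sum>t=1..n. of_nat t * tau t * P (n - t)) + (\<Sum>t=1..n. tau t * (of_nat (n - t) * P (n - t)))"
    by (simp add: sum.distrib algebra_simps)
  also have "(\<Sum>t=1..n. tau t * (of_nat (n - t) * P (n - t)))
      = (\<Sum>t=1..n. tau t * (\<Sum>s=1..n - t. sigma s * P (n - t - s)))"
    by (simp only: P)
  also have "\<dots> = (\<Sum>k=1..n - 1. N k * sigma (n - k))"
    by (simp only: convolution_assoc N)
  finally show ?thesis by (simp add: add.commute)
qed

theorem theorem4:
  fixes A :: "nat set" and n :: nat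
  assumes "A \<noteq> {}" and "\<forall>a\<in>A. 0 < a" and "0 < n"
  shows "(int n * int (Np A n) =
           (\<Sum>k=1..n-1. int (Np A k) * sigma_A A (n - k))
         + (\<Sum>t=1..n. int t * tau_A A t * int (p_A A (n - t))))
       \<and> (int n * int (Nq A n) =
           (\<Sum>k=1..n-1. int (Nq A k) * sigma_s_A A (n - k))
         + (\<Sum>t=1..n. int t * tau_s_A A t * int (q_A A (n - t))))"
  using index_mult_convolution[OF Np_eq_convolution p_A_mult_eq_convolution, OF assms(2) assms(2)]
    index_mult_convolution[OF Nq_eq_convolution q_A_mult_eq_convolution, OF assms(2) assms(2)]
  by simp

end
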